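(* Let $d\ge1$, $\nu>0$, $\gamma>0$, and let $K$ be a random variable with $\Pr\{K=k\}=\alpha_k^{(\nu,\gamma)}$, $k=0,1,\dots$. Then $\sum_{k=0}^\infty\alpha_k^{(\nu,\gamma)}=1$; if $\nu>1$ then $E K=\frac{d\gamma^2}{2\nu-2}$; and if $\nu>2$ then \[ \operatorname{Var}(K)=\frac{d\gamma^2}{2(\nu-1)}\left(1+\frac{\gamma^2}{2}\,\frac{d+2(\nu-1)}{(\nu-1)(\nu-2)}\right). \]
   Context: $\alpha_k^{(\nu,\gamma)}=\frac{\Gamma(k+\frac d2)}{k!\,\Gamma(\frac d2)\Gamma(\nu)}\gamma^{2k}\int_0^{\infty}e^{-a}a^{\nu+\frac d2-1}(a+\gamma^2)^{-k-\frac d2}\,da$. *)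

theory Defs
  imports "HOL-Analysis.Analysis"
begin

definition alpha :: "nat \<Rightarrow> real \<Rightarrow> real \<Rightarrow> nat \<Rightarrow> real" where
  "alpha d \<nu> \<gamma> k =
     Gamma (real k + real d / 2) / (fact k * Gamma (real d / 2) * Gamma \<nu>) * \<gamma> ^ (2 * k) *
     (LINT a:{0<..}|lborel. exp (- a) * a powr (\<nu> + real d / 2 - 1)
                             * (a + \<gamma>\<^sup>2) powr (- real k - real d / 2))"

end

theory Submission
  imports Defs
begin

text \<open>
  The weights describe a Gamma mixture of negative binomial laws: if \<open>a\<close> is Gamma(\<open>\<nu>\<close>)
  distributed and, given \<open>a\<close>, \<open>K\<close> is negative binomial with shape \<open>d/2\<close> and success
  parameter \<open>\<gamma>\<^sup>2/(a + \<gamma>\<^sup>2)\<close>, then \<open>K\<close> has the law \<open>alpha\<close>.  The \<open>j\<close>-th factorial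
  moment of that negative binomial law is \<open>(d/2)\<^sub>j (\<gamma>\<^sup>2/a)\<^sup>j\<close> (a binomial series), and
  integrating \<open>a\<^sup>-\<^sup>j\<close> against the Gamma density gives \<open>\<Gamma>(\<nu> - j)/\<Gamma>(\<nu>)\<close>; sum and
  integral may be exchanged since everything is nonnegative.  The cases \<open>j = 0, 1, 2\<close>
  give total mass, mean and variance.
\<close>

lemma pochhammer_binomial_series:
  fixes r x :: real
  assumes "0 \<le> x" "x < 1"
  shows "(\<lambda>k. pochhammer r k / fact k * x ^ k) sums (1 - x) powr (- r)"
proof -
  have "(\<lambda>k. ((- r) gchoose k) * (- x) ^ k) sums (1 + - x) powr (- r)"
    by (rule gen_binomial_real) (use assms in auto)
  moreover have "((- r) gchoose k) * (- x) ^ k = pochhammer r k / fact k * x ^ k" for k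
  proof -
    have "((- r) gchoose k) * (- x) ^ k = ((- 1) ^ k * (- 1) ^ k) * (pochhammer r k / fact k * x ^ k)"
      by (simp add: gbinomial_pochhammer power_minus[of x])
    also have "(- 1 :: real) ^ k * (- 1) ^ k = 1"
      by (simp flip: power_add)
    finally show ?thesis by simp
  qed
  ultimately show ?thesis by simp
qed

lemma pochhammer_series_falling_factorial_sums:
  fixes r x :: real
  assumes "0 \<le> x" "x < 1"
  shows "(\<lambda>k. (\<Prod>i<j. real k - real i) * (pochhammer r k / fact k * x ^ k))
           sums (pochhammer r j * x ^ j * (1 - x) powr (- r - real j))"
proof (induction j arbitrary: r)
  case 0
  show ?case using pochhammer_binomial_series[OF assms] by simp
next
  case (Suc j)
  define f where "f = (\<lambda>k. (\<Prod>i<Suc j. real k - real i) * (pochhammer r k / fact k * x ^ k))"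
  have "(\<lambda>m. r * x * ((\<Prod>i<j. real m - real i) * (pochhammer (r + 1) m / fact m * x ^ m)))
          sums (r * x * (pochhammer (r + 1) j * x ^ j * (1 - x) powr (- (r + 1) - real j)))"
    using Suc.IH by (rule sums_mult)
  moreover have "r * x * ((\<Prod>i<j. real m - real i) * (pochhammer (r + 1) m / fact m * x ^ m))
      = (\<Prod>i<Suc j. real (Suc m) - real i) * (pochhammer r (Suc m) / fact (Suc m) * x ^ Suc m)" for m
  proof -
    have "(\<Prod>i<Suc j. real (Suc m) - real i) = real (Suc m) * (\<Prod>i<j. real m - real i)"
      by (subst prod.lessThan_Suc_shift) simp
    then show ?thesis
      by (simp add: pochhammer_rec field_simps del: of_nat_Suc)
  qed
  moreover have "r * x * (pochhammer (r + 1) j * x ^ j * (1 - x) powr (- (r + 1) - real j))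
      = pochhammer r (Suc j) * x ^ Suc j * (1 - x) powr (- r - real (Suc j))"
  proof -
    have "- (r + 1) - real j = - r - real (Suc j)" by simp
    then show ?thesis
      unfolding pochhammer_rec power_Suc by (simp only: mult_ac)
  qed
  ultimately have "(\<lambda>m. f (Suc m)) sums (pochhammer r (Suc j) * x ^ Suc j * (1 - x) powr (- r - real (Suc j)))"
    unfolding f_def by (simp only:)
  moreover have "f 0 = 0"
    unfolding f_def by (subst prod_zero) auto
  ultimately have "f sums (pochhammer r (Suc j) * x ^ Suc j * (1 - x) powr (- r - real (Suc j)))"
    using sums_Suc_iff[of f] by simp
  then show ?case
    unfolding f_def .
qed

definition neg_binomial_weight :: "real \<Rightarrow> real \<Rightarrow> nat \<Rightarrow> real" where
  "neg_binomial_weight r x k = pochhammer r k / fact k * x ^ k * (1 - x) powr r"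

lemma neg_binomial_weight_nonneg:
  assumes "0 < r" "0 \<le> x"
  shows "0 \<le> neg_binomial_weight r x k"
  unfolding neg_binomial_weight_def using assms by (simp add: pochhammer_nonneg)

lemma falling_factorial_nonneg: "0 \<le> (\<Prod>i<j. real k - real i)"
proof (cases "k < j")
  case True
  then show ?thesis by (subst prod_zero) auto
qed (auto intro: prod_nonneg)

lemma neg_binomial_factorial_moment_sums:
  fixes r x :: real
  assumes "0 \<le> x" "x < 1"
  shows "(\<lambda>k. (\<Prod>i<j. real k - real i) * neg_binomial_weight r x k)
           sums (pochhammer r j * (x / (1 - x)) ^ j)"
proof -
  have "(\<lambda>k. (\<Prod>i<j. real k - real i) * (pochhammer r k / fact k * x ^ k) * (1 - x) powr r)
          sums (pochhammer r j * x ^ j * (1 - x) powr (- r - real j) * (1 - x) powr r)"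
    by (rule sums_mult2, rule pochhammer_series_falling_factorial_sums) (use assms in auto)
  moreover have "(1 - x) powr (- r - real j) * (1 - x) powr r = 1 / (1 - x) ^ j"
    using assms by (simp add: powr_add[symmetric] powr_minus powr_realpow divide_inverse)
  ultimately show ?thesis
    by (simp add: neg_binomial_weight_def power_divide mult_ac)
qed

lemma alpha_gamma_mixture:
  assumes "d \<ge> 1" "\<gamma> > 0"
  shows "alpha d \<nu> \<gamma> k = (LINT a:{0<..}|lborel.
           exp (- a) * a powr (\<nu> - 1) / Gamma \<nu> * neg_binomial_weight (real d / 2) (\<gamma>\<^sup>2 / (a + \<gamma>\<^sup>2)) k)"
proof -
  define r where "r = real d / 2"
  define G where "G = \<gamma>\<^sup>2"
  have r: "r > 0" using assms(1) by (simp add: r_def)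
  have G: "G > 0" using assms(2) by (simp add: G_def)
  have "Gamma (real k + r) / (fact k * Gamma r * Gamma \<nu>) * \<gamma> ^ (2 * k) *
          (exp (- a) * a powr (\<nu> + r - 1) * (a + G) powr (- real k - r))
        = exp (- a) * a powr (\<nu> - 1) / Gamma \<nu> * neg_binomial_weight r (G / (a + G)) k"
    if "a \<in> {0<..}" for a
  proof -
    have a: "a > 0" using that by simp
    have "r \<notin> \<int>\<^sub>\<le>\<^sub>0" using r nonpos_Ints_nonpos by force
    then have Gamma_shift: "Gamma (real k + r) = pochhammer r k * Gamma r"
      using pochhammer_Gamma[of r k] Gamma_real_pos[OF r] by (simp add: add.commute)
    have gamma_pow: "\<gamma> ^ (2 * k) = G ^ k" by (simp add: G_def power_mult)
    have split_a: "a powr (\<nu> + r - 1) = a powr (\<nu> - 1) * a powr r"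
      by (simp add: powr_add[symmetric] algebra_simps)
    have split_aG: "(a + G) powr (- real k - r) = 1 / ((a + G) ^ k * (a + G) powr r)"
      using a G by (simp add: powr_diff powr_minus powr_realpow divide_inverse)
    have complement: "1 - G / (a + G) = a / (a + G)"
      using a G by (simp add: field_simps)
    have "Gamma r > 0" using r by (rule Gamma_real_pos)
    then show ?thesis
      unfolding neg_binomial_weight_def Gamma_shift gamma_pow split_a split_aG complement powr_divide
      using a G by (simp add: field_simps power_divide)
  qed
  then have "(LINT a:{0<..}|lborel. Gamma (real k + r) / (fact k * Gamma r * Gamma \<nu>) * \<gamma> ^ (2 * k) *
          (exp (- a) * a powr (\<nu> + r - 1) * (a + G) powr (- real k - r)))
        = (LINT a:{0<..}|lborel. exp (- a) * a powr (\<nu> - 1) / Gamma \<nu> * neg_binomial_weight r (G / (a + G)) k)"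
    by (intro set_lebesgue_integral_cong) auto
  then show ?thesis
    unfolding alpha_def r_def[symmetric] G_def[symmetric] by simp
qed

lemma has_bochner_integral_Gamma:
  fixes s :: real
  assumes "s > 0"
  shows "has_bochner_integral lborel (\<lambda>a. indicator {0<..} a * (exp (- a) * a powr (s - 1))) (Gamma s)"
proof -
  have "(\<lambda>a. indicator {0<..} a * (exp (- a) * a powr (s - 1)))
          = (\<lambda>t. indicator {0..} t * t powr (s - 1) / exp t)"
    by (rule ext) (auto simp: indicator_def exp_minus field_simps)
  then show ?thesis
    using assms Gamma_conv_nn_integral_real[OF assms]
    by (auto intro!: has_bochner_integral_nn_integral simp: Gamma_real_pos less_imp_le)
qed

lemma sums_integral_nonneg:
  fixes g :: "nat \<Rightarrow> 'a \<Rightarrow> real"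
  assumes meas: "\<And>k. g k \<in> borel_measurable M" and nonneg: "\<And>k x. 0 \<le> g k x"
    and sums: "\<And>x. (\<lambda>k. g k x) sums G x" and G: "integrable M G"
  shows "(\<lambda>k. integral\<^sup>L M (g k)) sums integral\<^sup>L M G"
proof -
  have partial_le: "(\<Sum>k\<in>I. g k x) \<le> G x" if "finite I" for I x
    using sum_le_suminf[OF sums_summable[OF sums] that] nonneg sums_unique[OF sums[of x]] by auto
  have "integrable M (g k)" for k
  proof (rule Bochner_Integration.integrable_bound[OF G meas], rule AE_I2)
    fix x
    show "norm (g k x) \<le> norm (G x)"
      using partial_le[of "{k}" x] nonneg[of k x] by simp
  qed
  moreover have "(\<lambda>n. integral\<^sup>L M (\<lambda>x. \<Sum>k<n. g k x)) \<longlonglongrightarrow> integral\<^sup>L M G"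
  proof (rule integral_dominated_convergence[where w = G])
    show "AE x in M. (\<lambda>n. \<Sum>k<n. g k x) \<longlonglongrightarrow> G x"
      using sums by (simp add: sums_def)
    show "AE x in M. norm (\<Sum>k<n. g k x) \<le> G x" for n
      using partial_le nonneg by (auto intro!: AE_I2 simp: sum_nonneg)
  qed (use G meas in auto)
  ultimately show ?thesis
    unfolding sums_def by (simp add: integral_sum)
qed

lemma neg_binomial_factorial_moment_sums_scaled:
  fixes G a :: real
  assumes "G > 0" "a > 0"
  shows "(\<lambda>k. (\<Prod>i<j. real k - real i) *
            (exp (- a) * a powr (\<nu> - 1) / Gamma \<nu> * neg_binomial_weight r (G / (a + G)) k))
           sums (pochhammer r j * G ^ j / Gamma \<nu> * (exp (- a) * a powr (\<nu> - real j - 1)))"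
proof -
  have "1 - G / (a + G) = a / (a + G)"
    using assms by (simp add: field_simps)
  then have "G / (a + G) / (1 - G / (a + G)) = G / a"
    using assms by simp
  then have "(\<lambda>k. (\<Prod>i<j. real k - real i) * neg_binomial_weight r (G / (a + G)) k)
          sums (pochhammer r j * (G / a) ^ j)"
    using neg_binomial_factorial_moment_sums[where x = "G / (a + G)"] assms by simp
  then have "(\<lambda>k. exp (- a) * a powr (\<nu> - 1) / Gamma \<nu> *
               ((\<Prod>i<j. real k - real i) * neg_binomial_weight r (G / (a + G)) k))
          sums (exp (- a) * a powr (\<nu> - 1) / Gamma \<nu> * (pochhammer r j * (G / a) ^ j))"
    by (rule sums_mult)
  moreover have "a powr (\<nu> - real j - 1) = a powr (\<nu> - 1) / a ^ j"
  proof -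
    have "a powr (\<nu> - real j - 1) = a powr ((\<nu> - 1) - real j)"
      by (rule arg_cong[where f = "\<lambda>t. a powr t"]) simp
    then show ?thesis
      using assms by (simp only: powr_diff powr_realpow)
  qed
  ultimately show ?thesis
    by (simp add: power_divide mult_ac)
qed

lemma alpha_factorial_moment_sums:
  assumes "d \<ge> 1" "\<gamma> > 0" "real j < \<nu>"
  shows "(\<lambda>k. (\<Prod>i<j. real k - real i) * alpha d \<nu> \<gamma> k)
           sums (pochhammer (real d / 2) j * \<gamma> ^ (2 * j) * Gamma (\<nu> - real j) / Gamma \<nu>)"
proof -
  define r where "r = real d / 2"
  define G where "G = \<gamma>\<^sup>2"
  define C where "C = pochhammer r j * G ^ j / Gamma \<nu>"
  have r: "r > 0" using assms(1) by (simp add: r_def)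
  have G: "G > 0" using assms(2) by (simp add: G_def)
  have \<nu>: "\<nu> > 0" using assms(3) by linarith
  define g where "g k a = indicator {0<..} a *
    ((\<Prod>i<j. real k - real i) * (exp (- a) * a powr (\<nu> - 1) / Gamma \<nu> * neg_binomial_weight r (G / (a + G)) k))"
    for k a
  define F where "F a = C * (indicator {0<..} a * (exp (- a) * a powr (\<nu> - real j - 1)))" for a :: real
  have F_integral: "has_bochner_integral lborel F (C * Gamma (\<nu> - real j))"
    unfolding F_def using assms(3)
    by (intro has_bochner_integral_mult_right has_bochner_integral_Gamma) simp
  have "(\<lambda>k. integral\<^sup>L lborel (g k)) sums integral\<^sup>L lborel F"
  proof (rule sums_integral_nonneg)
    show "g k \<in> borel_measurable lborel" for k
      unfolding g_def neg_binomial_weight_def by measurable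
    show "0 \<le> g k a" for k a
    proof (cases "a > 0")
      case True
      then have "0 \<le> neg_binomial_weight r (G / (a + G)) k"
        using r G by (intro neg_binomial_weight_nonneg) auto
      then show ?thesis
        unfolding g_def using True falling_factorial_nonneg[of k j] Gamma_real_pos[OF \<nu>]
        by (auto intro!: mult_nonneg_nonneg divide_nonneg_pos)
    qed (simp add: g_def)
    show "(\<lambda>k. g k a) sums F a" for a
      using neg_binomial_factorial_moment_sums_scaled[OF G, where a = a and \<nu> = \<nu> and j = j and r = r]
      unfolding g_def F_def C_def by (cases "a > 0") (simp_all add: mult_ac)
    show "integrable lborel F"
      using F_integral by (simp add: has_bochner_integral_iff)
  qed
  moreover have "integral\<^sup>L lborel (g k) = (\<Prod>i<j. real k - real i) * alpha d \<nu> \<gamma> k" for k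
  proof -
    have "g k = (\<lambda>a. (\<Prod>i<j. real k - real i) * (indicator {0<..} a *\<^sub>R
                 (exp (- a) * a powr (\<nu> - 1) / Gamma \<nu> * neg_binomial_weight r (G / (a + G)) k)))"
      by (auto simp: g_def fun_eq_iff)
    then show ?thesis
      unfolding alpha_gamma_mixture[OF assms(1,2)] set_lebesgue_integral_def r_def G_def
      by (simp only: integral_mult_right_zero)
  qed
  moreover have "integral\<^sup>L lborel F = C * Gamma (\<nu> - real j)"
    using F_integral by (simp add: has_bochner_integral_iff)
  ultimately show ?thesis
    by (simp add: C_def r_def G_def power_mult)
qed

lemma Gamma_diff_one_real:
  fixes x :: real
  assumes "x > 1"
  shows "Gamma (x - 1) = Gamma x / (x - 1)"
proof -
  have "x - 1 \<notin> \<int>\<^sub>\<le>\<^sub>0" using assms nonpos_Ints_nonpos by force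
  then have "Gamma x = (x - 1) * Gamma (x - 1)"
    using Gamma_plus1[of "x - 1"] by simp
  then show ?thesis using assms by simp
qed

lemma alpha_sums_one:
  assumes "d \<ge> 1" "\<gamma> > 0" "\<nu> > 0"
  shows "alpha d \<nu> \<gamma> sums 1"
proof -
  have "Gamma \<nu> \<noteq> 0" using Gamma_real_pos[OF assms(3)] by linarith
  then show ?thesis
    using alpha_factorial_moment_sums[of d \<gamma> 0 \<nu>] assms by simp
qed

lemma alpha_mean_sums:
  assumes "d \<ge> 1" "\<gamma> > 0" "\<nu> > 1"
  shows "(\<lambda>k. real k * alpha d \<nu> \<gamma> k) sums (real d * \<gamma>\<^sup>2 / (2 * \<nu> - 2))"
proof -
  have "Gamma \<nu> > 0" using assms(3) by (intro Gamma_real_pos) simp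
  then have "Gamma \<nu> \<noteq> 0" "\<nu> - 1 \<noteq> 0" using assms(3) by linarith+
  then have "pochhammer (real d / 2) 1 * \<gamma> ^ (2 * 1) * Gamma (\<nu> - real 1) / Gamma \<nu>
      = real d * \<gamma>\<^sup>2 / (2 * \<nu> - 2)"
    unfolding of_nat_1 Gamma_diff_one_real[OF assms(3)]
    by (simp add: divide_simps power2_eq_square)
  then show ?thesis
    using alpha_factorial_moment_sums[of d \<gamma> 1 \<nu>] assms by simp
qed

lemma alpha_second_factorial_moment_sums:
  assumes "d \<ge> 1" "\<gamma> > 0" "\<nu> > 2"
  shows "(\<lambda>k. real k * (real k - 1) * alpha d \<nu> \<gamma> k)
           sums (real d / 2 * (real d / 2 + 1) * \<gamma> ^ 4 / ((\<nu> - 1) * (\<nu> - 2)))"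
proof -
  have "Gamma \<nu> > 0" using assms(3) by (intro Gamma_real_pos) simp
  have "Gamma (\<nu> - 2) = Gamma (\<nu> - 1 - 1)" by simp
  also have "\<dots> = Gamma (\<nu> - 1) / (\<nu> - 1 - 1)"
    using assms(3) by (intro Gamma_diff_one_real) simp
  also have "\<dots> = Gamma \<nu> / ((\<nu> - 1) * (\<nu> - 2))"
    using assms(3) by (simp add: Gamma_diff_one_real)
  finally have Gamma_ratio: "Gamma (\<nu> - 2) = Gamma \<nu> / ((\<nu> - 1) * (\<nu> - 2))" .
  have pochhammer_2: "pochhammer (real d / 2) 2 = real d / 2 * (real d / 2 + 1)"
    by (simp add: numeral_2_eq_2 pochhammer_Suc)
  have "pochhammer (real d / 2) 2 * \<gamma> ^ (2 * 2) * Gamma (\<nu> - real 2) / Gamma \<nu>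
      = real d / 2 * (real d / 2 + 1) * \<gamma> ^ 4 / ((\<nu> - 1) * (\<nu> - 2))"
    unfolding of_nat_numeral Gamma_ratio pochhammer_2 using \<open>Gamma \<nu> > 0\<close> by simp
  moreover have "(\<Prod>i<2. real k - real i) = real k * (real k - 1)" for k
    by (simp add: lessThan_nat_numeral)
  ultimately show ?thesis
    using alpha_factorial_moment_sums[of d \<gamma> 2 \<nu>] assms by simp
qed

lemma sums_variance_from_factorial_moments:
  fixes p :: "nat \<Rightarrow> real"
  assumes "p sums 1" "(\<lambda>k. real k * p k) sums m" "(\<lambda>k. real k * (real k - 1) * p k) sums M"
  shows "(\<lambda>k. (real k - m)\<^sup>2 * p k) sums (M + m - m\<^sup>2)"
proof -
  have "(\<lambda>k. real k * (real k - 1) * p k + (1 - 2 * m) * (real k * p k) + m\<^sup>2 * p k)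
          sums (M + (1 - 2 * m) * m + m\<^sup>2 * 1)"
    using assms by (intro sums_add sums_mult)
  moreover have "real k * (real k - 1) * p k + (1 - 2 * m) * (real k * p k) + m\<^sup>2 * p k
      = (real k - m)\<^sup>2 * p k" for k
    by (simp add: power2_eq_square algebra_simps)
  ultimately show ?thesis
    by (simp add: power2_eq_square algebra_simps)
qed

lemma alpha_variance_sums:
  assumes "d \<ge> 1" "\<gamma> > 0" "\<nu> > 2"
  shows "(\<lambda>k. (real k - real d * \<gamma>\<^sup>2 / (2 * \<nu> - 2))\<^sup>2 * alpha d \<nu> \<gamma> k) sums
           (real d * \<gamma>\<^sup>2 / (2 * (\<nu> - 1)) *
             (1 + \<gamma>\<^sup>2 / 2 * ((real d + 2 * (\<nu> - 1)) / ((\<nu> - 1) * (\<nu> - 2)))))"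
proof -
  have "(\<lambda>k. (real k - real d * \<gamma>\<^sup>2 / (2 * \<nu> - 2))\<^sup>2 * alpha d \<nu> \<gamma> k)
      sums (real d / 2 * (real d / 2 + 1) * \<gamma> ^ 4 / ((\<nu> - 1) * (\<nu> - 2))
            + real d * \<gamma>\<^sup>2 / (2 * \<nu> - 2) - (real d * \<gamma>\<^sup>2 / (2 * \<nu> - 2))\<^sup>2)"
    using assms by (intro sums_variance_from_factorial_moments alpha_sums_one alpha_mean_sums
        alpha_second_factorial_moment_sums) simp_all
  moreover have "\<nu> - 1 \<noteq> 0" "\<nu> - 2 \<noteq> 0" "2 * \<nu> - 2 = 2 * (\<nu> - 1)"
    using assms(3) by simp_all
  then have "real d / 2 * (real d / 2 + 1) * \<gamma> ^ 4 / ((\<nu> - 1) * (\<nu> - 2))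
        + real d * \<gamma>\<^sup>2 / (2 * \<nu> - 2) - (real d * \<gamma>\<^sup>2 / (2 * \<nu> - 2))\<^sup>2
      = real d * \<gamma>\<^sup>2 / (2 * (\<nu> - 1)) *
          (1 + \<gamma>\<^sup>2 / 2 * ((real d + 2 * (\<nu> - 1)) / ((\<nu> - 1) * (\<nu> - 2))))"
    by (simp add: divide_simps power2_eq_square power4_eq_xxxx) (simp add: algebra_simps)
  ultimately show ?thesis by simp
qed

theorem theorem7:
  fixes d :: nat and \<nu> \<gamma> :: real
  assumes "d \<ge> 1" and "\<nu> > 0" and "\<gamma> > 0"
  shows "(\<lambda>k. alpha d \<nu> \<gamma> k) sums 1 \<and>
         (\<nu> > 1 \<longrightarrow> (\<lambda>k. real k * alpha d \<nu> \<gamma> k) sums (real d * \<gamma>\<^sup>2 / (2 * \<nu> - 2))) \<and>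
         (\<nu> > 2 \<longrightarrow>
           (\<lambda>k. (real k - real d * \<gamma>\<^sup>2 / (2 * \<nu> - 2))\<^sup>2 * alpha d \<nu> \<gamma> k) sums
             (real d * \<gamma>\<^sup>2 / (2 * (\<nu> - 1)) *
               (1 + \<gamma>\<^sup>2 / 2 * ((real d + 2 * (\<nu> - 1)) / ((\<nu> - 1) * (\<nu> - 2))))))"
  using assms alpha_sums_one[of d \<gamma> \<nu>] alpha_mean_sums[of d \<gamma> \<nu>] alpha_variance_sums[of d \<gamma> \<nu>]
  by simp

end
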